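(* (i) Let $\mathcal{F}$ be a nonempty set of bivariate distributions and let $\mathcal{F}_{X,Y}=\{(F(\cdot,\infty),F(\infty,\cdot)) : F\in\mathcal{F}\}$ be the set of pairs of margins occurring in $\mathcal{F}$. For $F_{X,Y}=(F_X,F_Y)\in\mathcal{F}_{X,Y}$ let $\mathcal{F}^{F_{X,Y}}$ be the set of members of $\mathcal{F}$ with margins $F_X,F_Y$, and let $\underline{\mathcal{F}}^{F_{X,Y}}$ and $\overline{\mathcal{F}}^{F_{X,Y}}$ be its pointwise infimum and supremum. Then there exists a family $\{(P_{F_{X,Y}},Q_{F_{X,Y}}) : F_{X,Y}\in\mathcal{F}_{X,Y}\}$ of coherent imprecise copulas such that $\underline{\mathcal{F}}^{F_{X,Y}}(x,y)=P_{F_{X,Y}}(F_X(x),F_Y(y))$ and $\overline{\mathcal{F}}^{F_{X,Y}}(x,y)=Q_{F_{X,Y}}(F_X(x),F_Y(y))$ for every $F_{X,Y}\in\mathcal{F}_{X,Y}$ and all $x,y\in\overline{\mathbb{R}}$. (ii) Let $\mathcal{F}_X,\mathcal{F}_Y$ be nonempty sets of univariate distributions, let $\mathcal{F}_{X,Y}\subseteq\mathcal{F}_X\times\mathcal{F}_Y$ be nonempty, and let $\{(P_{F_{X,Y}},Q_{F_{X,Y}})\}_{F_{X,Y}\in\mathcal{F}_{X,Y}}$ be a family of coherent imprecise copulas. Then $\mathcal{F}=\{C(F_X,F_Y) : (F_X,F_Y)\in\mathcal{F}_{X,Y},\ C\in\mathcal{C}(P_{F_{X,Y}},Q_{F_{X,Y}})\}$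 is a nonempty set of bivariate distributions.
   Context: $\overline{\mathbb{R}}=\mathbb{R}\cup\{-\infty,\infty\}$. A univariate distribution is a nondecreasing $G:\overline{\mathbb{R}}\to[0,1]$ with $G(-\infty)=0$, $G(\infty)=1$ (not necessarily right continuous). A bivariate distribution is $F:\overline{\mathbb{R}}^2\to[0,1]$ with $F(x,-\infty)=F(-\infty,y)=0$, $F(\infty,\infty)=1$ and $F(x_1,y_1)+F(x_2,y_2)-F(x_2,y_1)-F(x_1,y_2)\geqslant 0$ for all $x_1\leqslant x_2$, $y_1\leqslant y_2$; its margins are $F(\cdot,\infty)$ and $F(\infty,\cdot)$. A quasi-copula is $Q:[0,1]^2\to[0,1]$ with $Q(u,0)=Q(0,v)=0$, $Q(u,1)=u$, $Q(1,v)=v$, nondecreasing in each variable, and $|Q(u_1,v_1)-Q(u_2,v_2)|\leqslant|u_1-u_2|+|v_1-v_2|$; a copula is a quasi-copula with nonnegative volume of every rectangle in $[0,1]^2$. For quasi-copulas $P\leqslant Q$, $\mathcal{C}(P,Q)$ is the set of copulas $C$ with $P\leqslant C\leqslant Q$. A coherent imprecise copula is a pair of quasi-copulas $P\leqslant Q$ with $P=\inf\mathcal{C}(P,Q)$ and $Q=\sup\mathcal{C}(P,Q)$ (pointwise). $C(F_X,F_Y)$ denotes $(x,y)\mapsto C(F_X(x),F_Y(y))$. *)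

theory Defs
  imports "HOL-Library.Extended_Real"
begin

definition univariate_distribution :: "(ereal \<Rightarrow> real) \<Rightarrow> bool" where
  "univariate_distribution G \<longleftrightarrow>
     mono G \<and> G (-\<infinity>) = 0 \<and> G \<infinity> = 1 \<and> (\<forall>x. 0 \<le> G x \<and> G x \<le> 1)"

definition bivariate_distribution :: "(ereal \<Rightarrow> ereal \<Rightarrow> real) \<Rightarrow> bool" where
  "bivariate_distribution F \<longleftrightarrow>
     (\<forall>x y. 0 \<le> F x y \<and> F x y \<le> 1) \<and>
     (\<forall>x. F x (-\<infinity>) = 0) \<and> (\<forall>y. F (-\<infinity>) y = 0) \<and> F \<infinity> \<infinity> = 1 \<and>
     (\<forall>x1 x2 y1 y2. x1 \<le> x2 \<longrightarrow> y1 \<le> y2 \<longrightarrow>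
        F x1 y1 + F x2 y2 - F x2 y1 - F x1 y2 \<ge> 0)"

definition margins :: "(ereal \<Rightarrow> ereal \<Rightarrow> real) \<Rightarrow> (ereal \<Rightarrow> real) \<times> (ereal \<Rightarrow> real)" where
  "margins F = ((\<lambda>x. F x \<infinity>), (\<lambda>y. F \<infinity> y))"

definition quasi_copula :: "(real \<Rightarrow> real \<Rightarrow> real) \<Rightarrow> bool" where
  "quasi_copula Q \<longleftrightarrow>
     (\<forall>u\<in>{0..1}. \<forall>v\<in>{0..1}. 0 \<le> Q u v \<and> Q u v \<le> 1) \<and>
     (\<forall>u\<in>{0..1}. Q u 0 = 0 \<and> Q u 1 = u) \<and>
     (\<forall>v\<in>{0..1}. Q 0 v = 0 \<and> Q 1 v = v) \<and>
     (\<forall>u1\<in>{0..1}. \<forall>u2\<in>{0..1}. \<forall>v\<in>{0..1}. u1 \<le> u2 \<longrightarrow> Q u1 v \<le> Q u2 v) \<and>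
     (\<forall>u\<in>{0..1}. \<forall>v1\<in>{0..1}. \<forall>v2\<in>{0..1}. v1 \<le> v2 \<longrightarrow> Q u v1 \<le> Q u v2) \<and>
     (\<forall>u1\<in>{0..1}. \<forall>u2\<in>{0..1}. \<forall>v1\<in>{0..1}. \<forall>v2\<in>{0..1}.
        \<bar>Q u1 v1 - Q u2 v2\<bar> \<le> \<bar>u1 - u2\<bar> + \<bar>v1 - v2\<bar>)"

definition copula :: "(real \<Rightarrow> real \<Rightarrow> real) \<Rightarrow> bool" where
  "copula C \<longleftrightarrow> quasi_copula C \<and>
     (\<forall>u1\<in>{0..1}. \<forall>u2\<in>{0..1}. \<forall>v1\<in>{0..1}. \<forall>v2\<in>{0..1}.
        u1 \<le> u2 \<longrightarrow> v1 \<le> v2 \<longrightarrow> C u1 v1 + C u2 v2 - C u2 v1 - C u1 v2 \<ge> 0)"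

definition copulas_between ::
  "(real \<Rightarrow> real \<Rightarrow> real) \<Rightarrow> (real \<Rightarrow> real \<Rightarrow> real) \<Rightarrow> (real \<Rightarrow> real \<Rightarrow> real) set" where
  "copulas_between P Q = {C. copula C \<and>
     (\<forall>u\<in>{0..1}. \<forall>v\<in>{0..1}. P u v \<le> C u v \<and> C u v \<le> Q u v)}"

text \<open>Coherent imprecise copula; the infimum/supremum being attained as P and Q requires
  the set of copulas in between to be nonempty (an empty infimum is not P).\<close>
definition coherent_imprecise_copula ::
  "(real \<Rightarrow> real \<Rightarrow> real) \<Rightarrow> (real \<Rightarrow> real \<Rightarrow> real) \<Rightarrow> bool" where
  "coherent_imprecise_copula P Q \<longleftrightarrow>
     quasi_copula P \<and> quasi_copula Q \<and>
     (\<forall>u\<in>{0..1}. \<forall>v\<in>{0..1}. P u v \<le> Q u v) \<and>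
     copulas_between P Q \<noteq> {} \<and>
     (\<forall>u\<in>{0..1}. \<forall>v\<in>{0..1}.
        P u v = (INF C\<in>copulas_between P Q. C u v) \<and>
        Q u v = (SUP C\<in>copulas_between P Q. C u v))"

end

theory Submission
  imports Defs "HOL-Analysis.Analysis"
begin

text \<open>
  (i) By Sklar's theorem every bivariate distribution \<open>F\<close> is \<open>C(F\<^sub>X, F\<^sub>Y)\<close> for some copula
  \<open>C\<close>. The values of \<open>F\<close> define a subcopula on the ranges of the margins; being 1-Lipschitz it
  extends to the closures of the ranges, and then across the gaps by linear interpolation, one
  variable at a time. Hence, for fixed margins, the envelopes of the distributions are the envelopes
  of their copulas composed with the margins. The envelopes of a family of copulas are
  quasi-copulas, because the quasi-copula axioms amount to boundary conditions and inequalities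
  \<open>Q(u\<^sub>1,v\<^sub>1) \<le> Q(u\<^sub>2,v\<^sub>2) + c\<close>, which infima and suprema both preserve; they are coherent
  because the copulas of the family lie between them.

  (ii) The rectangle inequality of \<open>C(F\<^sub>X, F\<^sub>Y)\<close> is that of \<open>C\<close> at points ordered by the
  monotone margins.
\<close>

section \<open>Quasi-copulas and envelopes of copulas\<close>

lemma quasi_copula_iff_increment_le:
  "quasi_copula Q \<longleftrightarrow>
     (\<forall>u\<in>{0..1}. Q u 0 = 0 \<and> Q u 1 = u) \<and> (\<forall>v\<in>{0..1}. Q 0 v = 0 \<and> Q 1 v = v) \<and>
     (\<forall>u1\<in>{0..1}. \<forall>u2\<in>{0..1}. \<forall>v1\<in>{0..1}. \<forall>v2\<in>{0..1}.
        Q u1 v1 \<le> Q u2 v2 + (max 0 (u1 - u2) + max 0 (v1 - v2)))"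
  (is "_ \<longleftrightarrow> ?bd0 \<and> ?bd1 \<and> ?incr")
proof
  assume q: "quasi_copula Q"
  have mono1: "Q u1 v \<le> Q u2 v" if "u1 \<in> {0..1}" "u2 \<in> {0..1}" "v \<in> {0..1}" "u1 \<le> u2" for u1 u2 v
    using q that unfolding quasi_copula_def by blast
  have mono2: "Q u v1 \<le> Q u v2" if "u \<in> {0..1}" "v1 \<in> {0..1}" "v2 \<in> {0..1}" "v1 \<le> v2" for u v1 v2
    using q that unfolding quasi_copula_def by blast
  have lip: "\<bar>Q u1 v1 - Q u2 v2\<bar> \<le> \<bar>u1 - u2\<bar> + \<bar>v1 - v2\<bar>"
    if "u1 \<in> {0..1}" "u2 \<in> {0..1}" "v1 \<in> {0..1}" "v2 \<in> {0..1}" for u1 u2 v1 v2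
    using q that unfolding quasi_copula_def by blast
  have "Q u1 v1 \<le> Q u2 v2 + (max 0 (u1 - u2) + max 0 (v1 - v2))"
    if "u1 \<in> {0..1}" "u2 \<in> {0..1}" "v1 \<in> {0..1}" "v2 \<in> {0..1}" for u1 u2 v1 v2
  proof -
    have "Q u1 v1 \<le> Q u2 v1 + max 0 (u1 - u2)"
      using mono1[of u1 u2 v1] lip[of u1 u2 v1 v1] that by (cases "u1 \<le> u2") auto
    moreover have "Q u2 v1 \<le> Q u2 v2 + max 0 (v1 - v2)"
      using mono2[of u2 v1 v2] lip[of u2 u2 v1 v2] that by (cases "v1 \<le> v2") auto
    ultimately show ?thesis by linarith
  qed
  moreover have ?bd0 ?bd1 using q unfolding quasi_copula_def by blast+
  ultimately show "?bd0 \<and> ?bd1 \<and> ?incr" by blast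
next
  assume "?bd0 \<and> ?bd1 \<and> ?incr"
  then have bd: ?bd0 ?bd1 and incr: ?incr by blast+
  have mono1: "Q u1 v \<le> Q u2 v" if "u1 \<in> {0..1}" "u2 \<in> {0..1}" "v \<in> {0..1}" "u1 \<le> u2" for u1 u2 v
    using incr that by fastforce
  have mono2: "Q u v1 \<le> Q u v2" if "u \<in> {0..1}" "v1 \<in> {0..1}" "v2 \<in> {0..1}" "v1 \<le> v2" for u v1 v2
    using incr that by fastforce
  have "0 \<le> Q u v \<and> Q u v \<le> 1" if "u \<in> {0..1}" "v \<in> {0..1}" for u v
    using mono1[of 0 u v] mono1[of u 1 v] bd that by auto
  moreover have "\<bar>Q u1 v1 - Q u2 v2\<bar> \<le> \<bar>u1 - u2\<bar> + \<bar>v1 - v2\<bar>"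
    if "u1 \<in> {0..1}" "u2 \<in> {0..1}" "v1 \<in> {0..1}" "v2 \<in> {0..1}" for u1 u2 v1 v2
  proof -
    have "Q u1 v1 \<le> Q u2 v2 + (max 0 (u1 - u2) + max 0 (v1 - v2))"
      "Q u2 v2 \<le> Q u1 v1 + (max 0 (u2 - u1) + max 0 (v2 - v1))"
      using incr that by blast+
    then show ?thesis by linarith
  qed
  ultimately show "quasi_copula Q" unfolding quasi_copula_def using bd mono1 mono2 by blast
qed

lemma cINF_mono_plus:
  fixes f g :: "'i \<Rightarrow> real"
  assumes "I \<noteq> {}" "bdd_below (f ` I)" "\<And>i. i \<in> I \<Longrightarrow> f i \<le> g i + L"
  shows "(INF i\<in>I. f i) \<le> (INF i\<in>I. g i) + L"
proof -
  have "(INF i\<in>I. f i) - L \<le> (INF i\<in>I. g i)"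
    using assms cINF_lower[OF assms(2)] by (intro cINF_greatest) fastforce+
  then show ?thesis by linarith
qed

lemma cSUP_mono_plus:
  fixes f g :: "'i \<Rightarrow> real"
  assumes "I \<noteq> {}" "bdd_above (g ` I)" "\<And>i. i \<in> I \<Longrightarrow> f i \<le> g i + L"
  shows "(SUP i\<in>I. f i) \<le> (SUP i\<in>I. g i) + L"
  using assms cSUP_upper[OF _ assms(2)] by (intro cSUP_least) fastforce+

lemma quasi_copula_INF:
  assumes I: "I \<noteq> {}" and q: "\<And>i. i \<in> I \<Longrightarrow> quasi_copula (c i)"
  shows "quasi_copula (\<lambda>u v. INF i\<in>I. c i u v)"
  unfolding quasi_copula_iff_increment_le
proof (intro conjI ballI)
  fix u :: real assume "u \<in> {0..1}"
  then show "(INF i\<in>I. c i u 0) = 0" "(INF i\<in>I. c i u 1) = u"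
    using q I by (simp_all add: quasi_copula_iff_increment_le)
next
  fix v :: real assume "v \<in> {0..1}"
  then show "(INF i\<in>I. c i 0 v) = 0" "(INF i\<in>I. c i 1 v) = v"
    using q I by (simp_all add: quasi_copula_iff_increment_le)
next
  fix u1 u2 v1 v2 :: real
  assume uv: "u1 \<in> {0..1}" "u2 \<in> {0..1}" "v1 \<in> {0..1}" "v2 \<in> {0..1}"
  have "bdd_below ((\<lambda>i. c i u1 v1) ` I)"
    using q uv unfolding quasi_copula_def by (intro bdd_belowI[of _ 0]) blast
  then show "(INF i\<in>I. c i u1 v1) \<le> (INF i\<in>I. c i u2 v2) + (max 0 (u1 - u2) + max 0 (v1 - v2))"
    using q uv I by (intro cINF_mono_plus) (auto simp: quasi_copula_iff_increment_le)
qed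

lemma quasi_copula_SUP:
  assumes I: "I \<noteq> {}" and q: "\<And>i. i \<in> I \<Longrightarrow> quasi_copula (c i)"
  shows "quasi_copula (\<lambda>u v. SUP i\<in>I. c i u v)"
  unfolding quasi_copula_iff_increment_le
proof (intro conjI ballI)
  fix u :: real assume "u \<in> {0..1}"
  then show "(SUP i\<in>I. c i u 0) = 0" "(SUP i\<in>I. c i u 1) = u"
    using q I by (simp_all add: quasi_copula_iff_increment_le)
next
  fix v :: real assume "v \<in> {0..1}"
  then show "(SUP i\<in>I. c i 0 v) = 0" "(SUP i\<in>I. c i 1 v) = v"
    using q I by (simp_all add: quasi_copula_iff_increment_le)
next
  fix u1 u2 v1 v2 :: real
  assume uv: "u1 \<in> {0..1}" "u2 \<in> {0..1}" "v1 \<in> {0..1}" "v2 \<in> {0..1}"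
  have "bdd_above ((\<lambda>i. c i u2 v2) ` I)"
    using q uv unfolding quasi_copula_def by (intro bdd_aboveI[of _ 1]) blast
  then show "(SUP i\<in>I. c i u1 v1) \<le> (SUP i\<in>I. c i u2 v2) + (max 0 (u1 - u2) + max 0 (v1 - v2))"
    using q uv I by (intro cSUP_mono_plus) (auto simp: quasi_copula_iff_increment_le)
qed

lemma coherent_imprecise_copula_INF_SUP:
  assumes I: "I \<noteq> {}" and cop: "\<And>i. i \<in> I \<Longrightarrow> copula (c i)"
  shows "coherent_imprecise_copula (\<lambda>u v. INF i\<in>I. c i u v) (\<lambda>u v. SUP i\<in>I. c i u v)"
    (is "coherent_imprecise_copula ?P ?Q")
proof -
  have q: "quasi_copula (c i)" if "i \<in> I" for i
    using cop[OF that] unfolding copula_def by blast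
  have bdd: "bdd_below ((\<lambda>i. c i u v) ` I)" "bdd_above ((\<lambda>i. c i u v) ` I)"
    if "u \<in> {0..1}" "v \<in> {0..1}" for u v
    using q that unfolding quasi_copula_def by (auto intro!: bdd_belowI[of _ 0] bdd_aboveI[of _ 1])
  have between: "c i \<in> copulas_between ?P ?Q" if "i \<in> I" for i
    unfolding copulas_between_def using cop bdd that by (auto intro: cINF_lower cSUP_upper)
  then have ne: "copulas_between ?P ?Q \<noteq> {}" using I by blast
  have "?P u v = (INF C\<in>copulas_between ?P ?Q. C u v) \<and> ?Q u v = (SUP C\<in>copulas_between ?P ?Q. C u v)"
    if uv: "u \<in> {0..1}" "v \<in> {0..1}" for u v
  proof -
    have bounds: "?P u v \<le> C u v" "C u v \<le> ?Q u v" if "C \<in> copulas_between ?P ?Q" for C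
      using that uv unfolding copulas_between_def by auto
    have "(INF C\<in>copulas_between ?P ?Q. C u v) \<le> ?P u v"
      using I between bounds(1) by (intro cINF_mono) (auto intro!: bdd_belowI)
    moreover have "?Q u v \<le> (SUP C\<in>copulas_between ?P ?Q. C u v)"
      using I between bounds(2) by (intro cSUP_mono) (auto intro!: bdd_aboveI)
    ultimately show ?thesis
      using ne bounds by (auto intro!: antisym cINF_greatest cSUP_least)
  qed
  moreover have "?P u v \<le> ?Q u v" if "u \<in> {0..1}" "v \<in> {0..1}" for u v
    using between[THEN copulas_between_def[THEN eqset_imp_iff, THEN iffD1]] I that by fastforce
  moreover have "quasi_copula ?P" by (rule quasi_copula_INF[OF I q])
  moreover have "quasi_copula ?Q" by (rule quasi_copula_SUP[OF I q])
  ultimately show ?thesis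
    unfolding coherent_imprecise_copula_def using ne by blast
qed

section \<open>Extending subcopulas to copulas\<close>

definition two_increasing_on :: "real set \<Rightarrow> real set \<Rightarrow> (real \<Rightarrow> real \<Rightarrow> real) \<Rightarrow> bool" where
  "two_increasing_on A B S \<longleftrightarrow>
     (\<forall>u1\<in>A. \<forall>u2\<in>A. \<forall>v1\<in>B. \<forall>v2\<in>B. u1 \<le> u2 \<longrightarrow> v1 \<le> v2 \<longrightarrow>
        S u1 v1 + S u2 v2 - S u2 v1 - S u1 v2 \<ge> 0)"

definition subcopula :: "real set \<Rightarrow> real set \<Rightarrow> (real \<Rightarrow> real \<Rightarrow> real) \<Rightarrow> bool" where
  "subcopula A B S \<longleftrightarrow>
     A \<subseteq> {0..1} \<and> B \<subseteq> {0..1} \<and> 0 \<in> A \<and> 1 \<in> A \<and> 0 \<in> B \<and> 1 \<in> B \<and>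
     (\<forall>u\<in>A. S u 0 = 0 \<and> S u 1 = u) \<and> (\<forall>v\<in>B. S 0 v = 0 \<and> S 1 v = v) \<and>
     two_increasing_on A B S"

lemma two_increasing_onD:
  "two_increasing_on A B S \<Longrightarrow> u1 \<in> A \<Longrightarrow> u2 \<in> A \<Longrightarrow> v1 \<in> B \<Longrightarrow> v2 \<in> B \<Longrightarrow>
    u1 \<le> u2 \<Longrightarrow> v1 \<le> v2 \<Longrightarrow> S u1 v1 + S u2 v2 - S u2 v1 - S u1 v2 \<ge> 0"
  unfolding two_increasing_on_def by blast

lemma subcopula_transpose: "subcopula A B S \<Longrightarrow> subcopula B A (\<lambda>v u. S u v)"
  unfolding subcopula_def two_increasing_on_def by (smt (verit))

lemma subcopula_increment_left:
  assumes "subcopula A B S" "u1 \<in> A" "u2 \<in> A" "v \<in> B" "u1 \<le> u2"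
  shows "0 \<le> S u2 v - S u1 v" "S u2 v - S u1 v \<le> u2 - u1"
proof -
  have "v \<in> {0..1}" "0 \<in> B" "1 \<in> B" "two_increasing_on A B S"
    using assms unfolding subcopula_def by auto
  then have "S u1 0 + S u2 v - S u2 0 - S u1 v \<ge> 0" "S u1 v + S u2 1 - S u2 v - S u1 1 \<ge> 0"
    using two_increasing_onD assms(2-5) by auto
  moreover have "S u1 0 = 0" "S u2 0 = 0" "S u1 1 = u1" "S u2 1 = u2"
    using assms unfolding subcopula_def by auto
  ultimately show "0 \<le> S u2 v - S u1 v" "S u2 v - S u1 v \<le> u2 - u1" by linarith+
qed

lemma copula_if_subcopula_unit_square:
  assumes S: "subcopula {0..1} {0..1} S"
  shows "copula S"
proof -
  have "S u1 v1 \<le> S u2 v2 + (max 0 (u1 - u2) + max 0 (v1 - v2))"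
    if uv: "u1 \<in> {0..1}" "u2 \<in> {0..1}" "v1 \<in> {0..1}" "v2 \<in> {0..1}" for u1 u2 v1 v2
  proof -
    have "S u1 v1 \<le> S u2 v1 + max 0 (u1 - u2)"
      using subcopula_increment_left[OF S, of u1 u2 v1] subcopula_increment_left[OF S, of u2 u1 v1] uv
      by (cases "u1 \<le> u2") auto
    moreover have "S u2 v1 \<le> S u2 v2 + max 0 (v1 - v2)"
      using subcopula_increment_left[OF subcopula_transpose[OF S], of v1 v2 u2]
        subcopula_increment_left[OF subcopula_transpose[OF S], of v2 v1 u2] uv
      by (cases "v1 \<le> v2") auto
    ultimately show ?thesis by linarith
  qed
  moreover have "\<forall>u\<in>{0..1}. S u 0 = 0 \<and> S u 1 = u" "\<forall>v\<in>{0..1}. S 0 v = 0 \<and> S 1 v = v"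
    using S unfolding subcopula_def by auto
  ultimately have "quasi_copula S"
    unfolding quasi_copula_iff_increment_le by blast
  moreover have "two_increasing_on {0..1} {0..1} S"
    using S unfolding subcopula_def by blast
  ultimately show ?thesis
    unfolding copula_def two_increasing_on_def by blast
qed

lemma continuous_on_closure_mono:
  fixes h :: "real \<Rightarrow> real"
  assumes h: "continuous_on (closure A) h"
    and mono: "\<And>a b. a \<in> A \<Longrightarrow> b \<in> A \<Longrightarrow> a \<le> b \<Longrightarrow> h a \<le> h b"
    and xy: "x \<in> closure A" "y \<in> closure A" "x \<le> y"
  shows "h x \<le> h y"
proof (cases "x = y")
  case False
  define m where "m = (x + y) / 2"
  have "x < m" "m < y" using xy(3) False by (simp_all add: m_def)
  then have x: "x \<in> closure ({..<m} \<inter> A)" and y: "y \<in> closure ({m<..} \<inter> A)"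
    using open_Int_closure_subset[of "{..<m}" A] open_Int_closure_subset[of "{m<..}" A] xy(1,2)
    by auto
  have cont: "continuous_on (closure (M \<inter> A)) h" for M
    by (rule continuous_on_subset[OF h closure_mono]) blast
  have "h x \<le> h b" if "b \<in> {m<..} \<inter> A" for b
    by (rule continuous_le_on_closure[OF cont x]) (use mono that in auto)
  then show "h x \<le> h y"
    by (rule continuous_ge_on_closure[OF cont y])
qed simp

lemma two_increasing_on_closure_left:
  assumes inc: "two_increasing_on A B S"
    and cont: "\<And>v. v \<in> B \<Longrightarrow> continuous_on (closure A) (\<lambda>u. T u v)"
    and agree: "\<And>u v. u \<in> A \<Longrightarrow> v \<in> B \<Longrightarrow> T u v = S u v"
  shows "two_increasing_on (closure A) B T"
  unfolding two_increasing_on_def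
proof (intro ballI impI)
  fix u1 u2 v1 v2
  assume u: "u1 \<in> closure A" "u2 \<in> closure A" and v: "v1 \<in> B" "v2 \<in> B" "u1 \<le> u2" "v1 \<le> v2"
  have "T u1 v2 - T u1 v1 \<le> T u2 v2 - T u2 v1"
  proof (rule continuous_on_closure_mono[where h = "\<lambda>u. T u v2 - T u v1", OF _ _ u v(3)])
    show "continuous_on (closure A) (\<lambda>u. T u v2 - T u v1)"
      using cont[OF v(2)] cont[OF v(1)] by (rule continuous_on_diff)
    show "T a v2 - T a v1 \<le> T b v2 - T b v1" if "a \<in> A" "b \<in> A" "a \<le> b" for a b
      using two_increasing_onD[OF inc that(1,2) v(1,2) that(3) v(4)] that v agree by simp
  qed
  then show "T u1 v1 + T u2 v2 - T u2 v1 - T u1 v2 \<ge> 0" by simp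
qed

lemma subcopula_extend_to_closure:
  assumes S: "subcopula A B S"
  shows "\<exists>T. subcopula (closure A) B T \<and> (\<forall>u\<in>A. \<forall>v\<in>B. T u v = S u v)"
proof -
  have "\<exists>g. 1-lipschitz_on (closure A) g \<and> (\<forall>u\<in>A. g u = S u v)" if "v \<in> B" for v
  proof (rule lipschitz_extend_closure, rule lipschitz_onI)
    show "dist (S u1 v) (S u2 v) \<le> 1 * dist u1 u2" if "u1 \<in> A" "u2 \<in> A" for u1 u2
      using subcopula_increment_left[OF S, of u1 u2 v] subcopula_increment_left[OF S, of u2 u1 v]
        that \<open>v \<in> B\<close>
      by (cases "u1 \<le> u2") (auto simp: dist_real_def)
  qed simp
  then obtain G where G: "\<And>v. v \<in> B \<Longrightarrow> continuous_on (closure A) (G v)"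
    "\<And>u v. u \<in> A \<Longrightarrow> v \<in> B \<Longrightarrow> G v u = S u v"
    using lipschitz_on_continuous_on by metis
  define T where "T u v = G v u" for u v
  have cont: "continuous_on (closure A) (\<lambda>u. T u v)" if "v \<in> B" for v
    using G(1)[OF that] unfolding T_def by simp
  have agree: "T u v = S u v" if "u \<in> A" "v \<in> B" for u v
    using G(2)[OF that] unfolding T_def .
  have s: "A \<subseteq> {0..1}" "B \<subseteq> {0..1}" "0 \<in> A" "1 \<in> A" "0 \<in> B" "1 \<in> B"
     "\<forall>u\<in>A. S u 0 = 0 \<and> S u 1 = u" "\<forall>v\<in>B. S 0 v = 0 \<and> S 1 v = v" "two_increasing_on A B S"
    using S unfolding subcopula_def by auto
  have "T u 0 = 0" "T u 1 = u" if "u \<in> closure A" for u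
  proof -
    show "T u 0 = 0"
      by (rule continuous_constant_on_closure[OF cont[OF s(5)] _ that]) (simp add: agree s(5,7))
    have "continuous_on (closure A) (\<lambda>w. T w 1 - w)"
      using cont[OF s(6)] by (intro continuous_intros)
    then have "T u 1 - u = 0"
      by (rule continuous_constant_on_closure[OF _ _ that]) (simp add: agree s(6,7))
    then show "T u 1 = u" by simp
  qed
  moreover have "T 0 v = 0 \<and> T 1 v = v" if "v \<in> B" for v
    using s(3,4,8) agree that by simp
  moreover have "two_increasing_on (closure A) B T"
    by (rule two_increasing_on_closure_left[OF s(9) cont agree])
  moreover have "closure A \<subseteq> {0..1}" using s(1) by (simp add: closure_minimal)
  moreover have "0 \<in> closure A" "1 \<in> closure A" using s(3,4) closure_subset by auto
  ultimately have "subcopula (closure A) B T"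
    using s(2,5,6) unfolding subcopula_def by blast
  then show ?thesis using agree by blast
qed

definition node_below :: "real set \<Rightarrow> real \<Rightarrow> real" where
  "node_below A u = Sup (A \<inter> {..u})"

definition node_above :: "real set \<Rightarrow> real \<Rightarrow> real" where
  "node_above A u = Inf (A \<inter> {u..})"

text \<open>At a node \<open>u\<close> both neighbouring nodes equal \<open>u\<close> and the weight is \<open>0 / 0 = 0\<close>.\<close>
definition interpolation_weight :: "real set \<Rightarrow> real \<Rightarrow> real" where
  "interpolation_weight A u = (u - node_below A u) / (node_above A u - node_below A u)"

definition interpolate :: "real set \<Rightarrow> (real \<Rightarrow> real) \<Rightarrow> real \<Rightarrow> real" where
  "interpolate A f u =
     f (node_below A u) + interpolation_weight A u * (f (node_above A u) - f (node_below A u))"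

lemma interpolate_diff:
  "interpolate A (\<lambda>w. f w - g w) u = interpolate A f u - interpolate A g u"
  unfolding interpolate_def by (simp add: algebra_simps)

lemma interpolate_const: "interpolate A (\<lambda>w. c) u = c"
  unfolding interpolate_def by simp

locale interpolation_nodes =
  fixes A :: "real set"
  assumes closed: "closed A" and subset: "A \<subseteq> {0..1}" and zero: "0 \<in> A" and one: "1 \<in> A"
begin

lemma node_below:
  assumes "u \<in> {0..1}"
  shows "node_below A u \<in> A" "node_below A u \<le> u" "\<And>a. a \<in> A \<Longrightarrow> a \<le> u \<Longrightarrow> a \<le> node_below A u"
proof -
  have bdd: "bdd_above (A \<inter> {..u})" by (rule bdd_aboveI[of _ u]) auto
  have "Sup (A \<inter> {..u}) \<in> A \<inter> {..u}"
    using zero assms closed bdd by (intro closed_contains_Sup) (auto simp: closed_Int)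
  then show "node_below A u \<in> A" "node_below A u \<le> u" unfolding node_below_def by auto
  show "\<And>a. a \<in> A \<Longrightarrow> a \<le> u \<Longrightarrow> a \<le> node_below A u"
    unfolding node_below_def using bdd by (intro cSup_upper) auto
qed

lemma node_above:
  assumes "u \<in> {0..1}"
  shows "node_above A u \<in> A" "u \<le> node_above A u" "\<And>a. a \<in> A \<Longrightarrow> u \<le> a \<Longrightarrow> node_above A u \<le> a"
proof -
  have bdd: "bdd_below (A \<inter> {u..})" by (rule bdd_belowI[of _ u]) auto
  have "Inf (A \<inter> {u..}) \<in> A \<inter> {u..}"
    using one assms closed bdd by (intro closed_contains_Inf) (auto simp: closed_Int)
  then show "node_above A u \<in> A" "u \<le> node_above A u" unfolding node_above_def by auto
  show "\<And>a. a \<in> A \<Longrightarrow> u \<le> a \<Longrightarrow> node_above A u \<le> a"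
    unfolding node_above_def using bdd by (intro cInf_lower) auto
qed

lemma nodes_of_node:
  assumes "a \<in> A"
  shows "node_below A a = a" "node_above A a = a"
proof -
  have a: "a \<in> {0..1}" using assms subset by auto
  show "node_below A a = a"
    using node_below(2)[OF a] node_below(3)[OF a assms order_refl] by (rule antisym)
  show "node_above A a = a"
    using node_above(3)[OF a assms order_refl] node_above(2)[OF a] by (rule antisym)
qed

lemma interpolation_weight_bounds:
  assumes "u \<in> {0..1}"
  shows "0 \<le> interpolation_weight A u" "interpolation_weight A u \<le> 1"
  using node_below(2)[OF assms] node_above(2)[OF assms]
  unfolding interpolation_weight_def by (auto simp: divide_le_eq_1)

lemma interpolate_node: "a \<in> A \<Longrightarrow> interpolate A f a = f a"
  unfolding interpolate_def interpolation_weight_def by (simp add: nodes_of_node)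

lemma interpolate_cong:
  "u \<in> {0..1} \<Longrightarrow> (\<And>a. a \<in> A \<Longrightarrow> f a = g a) \<Longrightarrow> interpolate A f u = interpolate A g u"
  unfolding interpolate_def using node_below(1) node_above(1) by simp

lemma interpolate_id:
  assumes "u \<in> {0..1}"
  shows "interpolate A (\<lambda>w. w) u = u"
proof (cases "node_above A u = node_below A u")
  case True
  then show ?thesis
    using node_below(2)[OF assms] node_above(2)[OF assms] unfolding interpolate_def by simp
next
  case False
  then show ?thesis unfolding interpolate_def interpolation_weight_def by simp
qed

lemma interpolate_between_nodes:
  assumes "u \<in> {0..1}" "f (node_below A u) \<le> f (node_above A u)"
  shows "f (node_below A u) \<le> interpolate A f u" "interpolate A f u \<le> f (node_above A u)"
proof -
  let ?t = "interpolation_weight A u" and ?d = "f (node_above A u) - f (node_below A u)"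
  have "0 \<le> ?t * ?d" "?t * ?d \<le> ?d"
    using interpolation_weight_bounds[OF assms(1)] assms(2) mult_right_mono[of ?t 1 ?d] by simp_all
  then show "f (node_below A u) \<le> interpolate A f u" "interpolate A f u \<le> f (node_above A u)"
    unfolding interpolate_def by auto
qed

lemma interpolate_mono:
  assumes mono: "\<And>a b. a \<in> A \<Longrightarrow> b \<in> A \<Longrightarrow> a \<le> b \<Longrightarrow> f a \<le> f b"
    and u: "u1 \<in> {0..1}" "u2 \<in> {0..1}" "u1 \<le> u2"
  shows "interpolate A f u1 \<le> interpolate A f u2"
proof -
  note L1 = node_below[OF u(1)] and L2 = node_below[OF u(2)]
    and H1 = node_above[OF u(1)] and H2 = node_above[OF u(2)]
  have between: "f (node_below A u) \<le> interpolate A f u" "interpolate A f u \<le> f (node_above A u)"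
    if "u \<in> {0..1}" for u
    using interpolate_between_nodes[OF that] mono node_below[OF that] node_above[OF that]
    by (meson order_trans)+
  show ?thesis
  proof (cases "node_above A u1 \<le> node_below A u2")
    case True
    then have "f (node_above A u1) \<le> f (node_below A u2)" using mono L2 H1 by auto
    then show ?thesis using between[OF u(1)] between[OF u(2)] by linarith
  next
    case False
    \<comment> \<open>\<open>u1\<close> and \<open>u2\<close> lie in the same gap of \<open>A\<close>\<close>
    then have "node_below A u2 < u1" "u2 < node_above A u1" using H1(3)[OF L2(1)] L2(3)[OF H1(1)] by (meson not_le)+
    then have same: "node_below A u1 = node_below A u2" "node_above A u1 = node_above A u2"
      using L1 L2 H1 H2 u(3) by (meson antisym order_trans less_imp_le)+
    have "interpolation_weight A u1 \<le> interpolation_weight A u2"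
      unfolding interpolation_weight_def same[symmetric] using L1(2) H1(2) u(3)
      by (intro divide_right_mono) auto
    moreover have "f (node_below A u1) \<le> f (node_above A u1)"
      using mono L1 H1 by (meson order_trans)
    ultimately show ?thesis
      unfolding interpolate_def same by (simp add: mult_right_mono)
  qed
qed

end

lemma subcopula_extend_from_closed_left:
  assumes "closed A" and S: "subcopula A B S"
  shows "\<exists>T. subcopula {0..1} B T \<and> (\<forall>u\<in>A. \<forall>v\<in>B. T u v = S u v)"
proof -
  have s: "A \<subseteq> {0..1}" "B \<subseteq> {0..1}" "0 \<in> A" "1 \<in> A" "0 \<in> B" "1 \<in> B"
     "\<forall>u\<in>A. S u 0 = 0 \<and> S u 1 = u" "\<forall>v\<in>B. S 0 v = 0 \<and> S 1 v = v" "two_increasing_on A B S"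
    using S unfolding subcopula_def by auto
  interpret interpolation_nodes A using assms(1) s by unfold_locales
  define T where "T u v = interpolate A (\<lambda>w. S w v) u" for u v
  have agree: "\<forall>u\<in>A. \<forall>v\<in>B. T u v = S u v" unfolding T_def by (simp add: interpolate_node)
  have "T u 0 = 0" "T u 1 = u" if "u \<in> {0..1}" for u
    unfolding T_def using interpolate_cong[OF that, of "\<lambda>w. S w 0" "\<lambda>w. 0"]
      interpolate_cong[OF that, of "\<lambda>w. S w 1" "\<lambda>w. w"] interpolate_const interpolate_id[OF that] s(7)
    by auto
  moreover have "T 0 v = 0 \<and> T 1 v = v" if "v \<in> B" for v
    using agree s(3,4,8) that by auto
  moreover have "two_increasing_on {0..1} B T"
    unfolding two_increasing_on_def
  proof (intro ballI impI)
    fix u1 u2 v1 v2 :: real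
    assume u: "u1 \<in> {0..1}" "u2 \<in> {0..1}" and v: "v1 \<in> B" "v2 \<in> B" "u1 \<le> u2" "v1 \<le> v2"
    have "S a v2 - S a v1 \<le> S b v2 - S b v1" if "a \<in> A" "b \<in> A" "a \<le> b" for a b
      using two_increasing_onD[OF s(9) that(1,2) v(1,2) that(3) v(4)] by linarith
    then have "interpolate A (\<lambda>w. S w v2 - S w v1) u1 \<le> interpolate A (\<lambda>w. S w v2 - S w v1) u2"
      by (rule interpolate_mono[OF _ u v(3)])
    then show "T u1 v1 + T u2 v2 - T u2 v1 - T u1 v2 \<ge> 0"
      unfolding T_def interpolate_diff by linarith
  qed
  ultimately have "subcopula {0..1} B T"
    using s(2,5,6) unfolding subcopula_def by auto
  then show ?thesis using agree by blast
qed

lemma subcopula_extend_left: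
  assumes "subcopula A B S"
  shows "\<exists>T. subcopula {0..1} B T \<and> (\<forall>u\<in>A. \<forall>v\<in>B. T u v = S u v)"
proof -
  obtain T1 where T1: "subcopula (closure A) B T1" "\<forall>u\<in>A. \<forall>v\<in>B. T1 u v = S u v"
    using subcopula_extend_to_closure[OF assms] by blast
  obtain T2 where "subcopula {0..1} B T2" "\<forall>u\<in>closure A. \<forall>v\<in>B. T2 u v = T1 u v"
    using subcopula_extend_from_closed_left[OF closed_closure T1(1)] by blast
  with T1(2) closure_subset show ?thesis by (metis subsetD)
qed

lemma subcopula_extends_to_copula:
  assumes "subcopula A B S"
  shows "\<exists>C. copula C \<and> (\<forall>u\<in>A. \<forall>v\<in>B. C u v = S u v)"
proof -
  obtain T where T: "subcopula {0..1} B T" "\<forall>u\<in>A. \<forall>v\<in>B. T u v = S u v"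
    using subcopula_extend_left[OF assms] by blast
  obtain T' where T': "subcopula {0..1} {0..1} T'" "\<forall>v\<in>B. \<forall>u\<in>{0..1}. T' v u = T u v"
    using subcopula_extend_left[OF subcopula_transpose[OF T(1)]] by blast
  have "copula (\<lambda>u v. T' v u)"
    using copula_if_subcopula_unit_square[OF subcopula_transpose[OF T'(1)]] .
  moreover have "A \<subseteq> {0..1}" using assms unfolding subcopula_def by blast
  ultimately show ?thesis using T(2) T'(2) by (metis subsetD)
qed

section \<open>Sklar's theorem\<close>

lemma bivariate_distribution_rectangle:
  "bivariate_distribution F \<Longrightarrow> x1 \<le> x2 \<Longrightarrow> y1 \<le> y2 \<Longrightarrow>
    F x1 y1 + F x2 y2 - F x2 y1 - F x1 y2 \<ge> 0"
  unfolding bivariate_distribution_def by blast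

lemma bivariate_distribution_increment_left:
  assumes F: "bivariate_distribution F" and "x1 \<le> x2"
  shows "0 \<le> F x2 y - F x1 y" "F x2 y - F x1 y \<le> F x2 \<infinity> - F x1 \<infinity>"
proof -
  have "F x1 (-\<infinity>) + F x2 y - F x2 (-\<infinity>) - F x1 y \<ge> 0" "F x1 y + F x2 \<infinity> - F x2 y - F x1 \<infinity> \<ge> 0"
    using bivariate_distribution_rectangle[OF F \<open>x1 \<le> x2\<close>, of "-\<infinity>" y]
      bivariate_distribution_rectangle[OF F \<open>x1 \<le> x2\<close>, of y \<infinity>] by simp_all
  moreover have "F x1 (-\<infinity>) = 0" "F x2 (-\<infinity>) = 0"
    using F unfolding bivariate_distribution_def by auto
  ultimately show "0 \<le> F x2 y - F x1 y" "F x2 y - F x1 y \<le> F x2 \<infinity> - F x1 \<infinity>" by linarith+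
qed

lemma bivariate_distribution_increment_right:
  assumes F: "bivariate_distribution F" and "y1 \<le> y2"
  shows "0 \<le> F x y2 - F x y1" "F x y2 - F x y1 \<le> F \<infinity> y2 - F \<infinity> y1"
proof -
  have "F (-\<infinity>) y1 + F x y2 - F x y1 - F (-\<infinity>) y2 \<ge> 0" "F x y1 + F \<infinity> y2 - F \<infinity> y1 - F x y2 \<ge> 0"
    using bivariate_distribution_rectangle[OF F _ \<open>y1 \<le> y2\<close>, of "-\<infinity>" x]
      bivariate_distribution_rectangle[OF F _ \<open>y1 \<le> y2\<close>, of x \<infinity>] by simp_all
  moreover have "F (-\<infinity>) y1 = 0" "F (-\<infinity>) y2 = 0"
    using F unfolding bivariate_distribution_def by auto
  ultimately show "0 \<le> F x y2 - F x y1" "F x y2 - F x y1 \<le> F \<infinity> y2 - F \<infinity> y1" by linarith+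
qed

lemma bivariate_distribution_eq_if_margin_eq_left:
  assumes "bivariate_distribution F" "F x1 \<infinity> = F x2 \<infinity>"
  shows "F x1 y = F x2 y"
proof (cases x1 x2 rule: linorder_le_cases)
  case le
  then show ?thesis using bivariate_distribution_increment_left[OF assms(1) le, of y] assms(2) by linarith
next
  case ge
  then show ?thesis using bivariate_distribution_increment_left[OF assms(1) ge, of y] assms(2) by linarith
qed

lemma bivariate_distribution_eq_if_margin_eq_right:
  assumes "bivariate_distribution F" "F \<infinity> y1 = F \<infinity> y2"
  shows "F x y1 = F x y2"
proof (cases y1 y2 rule: linorder_le_cases)
  case le
  then show ?thesis using bivariate_distribution_increment_right[OF assms(1) le, of x] assms(2) by linarith
next
  case ge
  then show ?thesis using bivariate_distribution_increment_right[OF assms(1) ge, of x] assms(2) by linarith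
qed

lemma bivariate_distribution_mono_margins:
  assumes "bivariate_distribution F"
  shows "mono (\<lambda>x. F x \<infinity>)" "mono (\<lambda>y. F \<infinity> y)"
  using bivariate_distribution_increment_left(1)[OF assms]
    bivariate_distribution_increment_right(1)[OF assms]
  by (auto intro!: monoI simp: diff_ge_0_iff_ge)

lemma mono_obtain_ordered_preimages:
  fixes f :: "'a::linorder \<Rightarrow> 'b::order"
  assumes "mono f" "f a \<le> f b"
  obtains x1 x2 where "x1 \<le> x2" "f x1 = f a" "f x2 = f b"
proof (cases "a \<le> b")
  case True
  then show ?thesis using that by blast
next
  case False
  then have "f b \<le> f a" using assms(1) by (simp add: monoD)
  then show ?thesis using that[of b b] assms(2) by auto
qed

text \<open>Any choice of preimages will do, since \<open>F x y\<close> depends on \<open>x\<close> only through \<open>F x \<infinity>\<close>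
  and on \<open>y\<close> only through \<open>F \<infinity> y\<close>.\<close>
definition distribution_subcopula :: "(ereal \<Rightarrow> ereal \<Rightarrow> real) \<Rightarrow> real \<Rightarrow> real \<Rightarrow> real" where
  "distribution_subcopula F u v = F (SOME x. F x \<infinity> = u) (SOME y. F \<infinity> y = v)"

lemma distribution_subcopula_margins:
  assumes "bivariate_distribution F"
  shows "distribution_subcopula F (F x \<infinity>) (F \<infinity> y) = F x y"
proof -
  let ?x = "SOME x'. F x' \<infinity> = F x \<infinity>" and ?y = "SOME y'. F \<infinity> y' = F \<infinity> y"
  have "F ?x \<infinity> = F x \<infinity>" "F \<infinity> ?y = F \<infinity> y" by (rule someI, rule refl)+
  then have "F ?x ?y = F x ?y" "F x ?y = F x y"
    using bivariate_distribution_eq_if_margin_eq_left[OF assms]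
      bivariate_distribution_eq_if_margin_eq_right[OF assms] by blast+
  then show ?thesis unfolding distribution_subcopula_def by simp
qed

lemma two_increasing_on_distribution_subcopula:
  assumes F: "bivariate_distribution F"
  shows "two_increasing_on (range (\<lambda>x. F x \<infinity>)) (range (\<lambda>y. F \<infinity> y)) (distribution_subcopula F)"
  unfolding two_increasing_on_def
proof (intro ballI impI)
  fix u1 u2 v1 v2
  assume "u1 \<in> range (\<lambda>x. F x \<infinity>)" "u2 \<in> range (\<lambda>x. F x \<infinity>)" "u1 \<le> u2"
    and "v1 \<in> range (\<lambda>y. F \<infinity> y)" "v2 \<in> range (\<lambda>y. F \<infinity> y)" "v1 \<le> v2"
  then obtain a1 a2 b1 b2 where ab: "u1 = F a1 \<infinity>" "u2 = F a2 \<infinity>" "v1 = F \<infinity> b1" "v2 = F \<infinity> b2"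
    by blast
  obtain x1 x2 where x: "x1 \<le> x2" "F x1 \<infinity> = u1" "F x2 \<infinity> = u2"
    using mono_obtain_ordered_preimages[OF bivariate_distribution_mono_margins(1)[OF F], of a1 a2]
      ab \<open>u1 \<le> u2\<close> by auto
  obtain y1 y2 where y: "y1 \<le> y2" "F \<infinity> y1 = v1" "F \<infinity> y2 = v2"
    using mono_obtain_ordered_preimages[OF bivariate_distribution_mono_margins(2)[OF F], of b1 b2]
      ab \<open>v1 \<le> v2\<close> by auto
  show "distribution_subcopula F u1 v1 + distribution_subcopula F u2 v2
      - distribution_subcopula F u2 v1 - distribution_subcopula F u1 v2 \<ge> 0"
    unfolding x(2,3)[symmetric] y(2,3)[symmetric] distribution_subcopula_margins[OF F]
    by (rule bivariate_distribution_rectangle[OF F x(1) y(1)])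
qed

lemma subcopula_distribution_subcopula:
  assumes F: "bivariate_distribution F"
  shows "subcopula (range (\<lambda>x. F x \<infinity>)) (range (\<lambda>y. F \<infinity> y)) (distribution_subcopula F)"
proof -
  have b: "\<And>x y. 0 \<le> F x y \<and> F x y \<le> 1" "\<And>x. F x (-\<infinity>) = 0" "\<And>y. F (-\<infinity>) y = 0" "F \<infinity> \<infinity> = 1"
    using F unfolding bivariate_distribution_def by auto
  note S = distribution_subcopula_margins[OF F]
  have nodes: "0 \<in> range (\<lambda>x. F x \<infinity>)" "1 \<in> range (\<lambda>x. F x \<infinity>)"
    "0 \<in> range (\<lambda>y. F \<infinity> y)" "1 \<in> range (\<lambda>y. F \<infinity> y)"
    using b(2,3,4) by (metis rangeI)+
  have left: "\<forall>u\<in>range (\<lambda>x. F x \<infinity>). distribution_subcopula F u 0 = 0 \<and> distribution_subcopula F u 1 = u"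
  proof
    fix u assume "u \<in> range (\<lambda>x. F x \<infinity>)"
    then obtain x where "u = F x \<infinity>" by blast
    then show "distribution_subcopula F u 0 = 0 \<and> distribution_subcopula F u 1 = u"
      using S[of x "-\<infinity>"] S[of x \<infinity>] b(2,4) by simp
  qed
  have right: "\<forall>v\<in>range (\<lambda>y. F \<infinity> y). distribution_subcopula F 0 v = 0 \<and> distribution_subcopula F 1 v = v"
  proof
    fix v assume "v \<in> range (\<lambda>y. F \<infinity> y)"
    then obtain y where "v = F \<infinity> y" by blast
    then show "distribution_subcopula F 0 v = 0 \<and> distribution_subcopula F 1 v = v"
      using S[of "-\<infinity>" y] S[of \<infinity> y] b(3,4) by simp
  qed
  have "range (\<lambda>x. F x \<infinity>) \<subseteq> {0..1}" "range (\<lambda>y. F \<infinity> y) \<subseteq> {0..1}"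
    using b(1) by auto
  with two_increasing_on_distribution_subcopula[OF F] nodes left right show ?thesis
    unfolding subcopula_def by (intro conjI)
qed

theorem sklar:
  assumes "bivariate_distribution F"
  shows "\<exists>C. copula C \<and> (\<forall>x y. F x y = C (F x \<infinity>) (F \<infinity> y))"
proof -
  obtain C where C: "copula C"
    "\<forall>u\<in>range (\<lambda>x. F x \<infinity>). \<forall>v\<in>range (\<lambda>y. F \<infinity> y). C u v = distribution_subcopula F u v"
    using subcopula_extends_to_copula[OF subcopula_distribution_subcopula[OF assms]] by blast
  then have "F x y = C (F x \<infinity>) (F \<infinity> y)" for x y
    by (simp add: distribution_subcopula_margins[OF assms])
  with C(1) show ?thesis by blast
qed

section \<open>Families of distributions and imprecise copulas\<close>

lemma bivariate_distribution_copula_of_margins: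
  assumes C: "copula C" and G: "univariate_distribution G" and H: "univariate_distribution H"
  shows "bivariate_distribution (\<lambda>x y. C (G x) (H y))"
proof -
  have G01: "G x \<in> {0..1}" and H01: "H y \<in> {0..1}" for x y
    using G H unfolding univariate_distribution_def by auto
  have q: "quasi_copula C" and inc: "two_increasing_on {0..1} {0..1} C"
    using C unfolding copula_def two_increasing_on_def by blast+
  have "C (G x1) (H y1) + C (G x2) (H y2) - C (G x2) (H y1) - C (G x1) (H y2) \<ge> 0"
    if "x1 \<le> x2" "y1 \<le> y2" for x1 x2 y1 y2
    using G H that by (intro two_increasing_onD[OF inc G01 G01 H01 H01])
      (auto simp: univariate_distribution_def monoD)
  with q G01 H01 G H show ?thesis
    unfolding bivariate_distribution_def quasi_copula_def univariate_distribution_def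
    by (simp add: atLeastAtMost_iff)
qed

lemma coherent_imprecise_copulas_of_distributions:
  fixes \<F> :: "(ereal \<Rightarrow> ereal \<Rightarrow> real) set"
  assumes "\<forall>F\<in>\<F>. bivariate_distribution F"
  shows "\<exists>P Q. \<forall>m\<in>margins ` \<F>.
           coherent_imprecise_copula (P m) (Q m) \<and>
           (\<forall>x y. (INF F\<in>{F\<in>\<F>. margins F = m}. F x y) = P m (fst m x) (snd m y) \<and>
                  (SUP F\<in>{F\<in>\<F>. margins F = m}. F x y) = Q m (fst m x) (snd m y))"
proof -
  obtain cop where cop: "\<And>F. F \<in> \<F> \<Longrightarrow> copula (cop F) \<and> (\<forall>x y. F x y = cop F (F x \<infinity>) (F \<infinity> y))"
    using sklar assms by metis
  define P where "P m = (\<lambda>u v. INF F\<in>{F\<in>\<F>. margins F = m}. cop F u v)" for m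
  define Q where "Q m = (\<lambda>u v. SUP F\<in>{F\<in>\<F>. margins F = m}. cop F u v)" for m
  show ?thesis
  proof (rule exI[of _ P], rule exI[of _ Q], intro ballI conjI allI)
    fix m assume m: "m \<in> margins ` \<F>"
    show "coherent_imprecise_copula (P m) (Q m)"
      unfolding P_def Q_def using m cop by (intro coherent_imprecise_copula_INF_SUP) auto
    fix x y
    have "F x y = cop F (fst m x) (snd m y)" if "F \<in> {F\<in>\<F>. margins F = m}" for F
      using cop that unfolding margins_def by auto
    then show "(INF F\<in>{F\<in>\<F>. margins F = m}. F x y) = P m (fst m x) (snd m y)"
      and "(SUP F\<in>{F\<in>\<F>. margins F = m}. F x y) = Q m (fst m x) (snd m y)"
      unfolding P_def Q_def by (auto intro: INF_cong SUP_cong)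
  qed
qed

theorem theorem14:
  shows
  "(\<forall>\<F> :: (ereal \<Rightarrow> ereal \<Rightarrow> real) set.
      \<F> \<noteq> {} \<and> (\<forall>F\<in>\<F>. bivariate_distribution F) \<longrightarrow>
      (\<exists>P Q :: (ereal \<Rightarrow> real) \<times> (ereal \<Rightarrow> real) \<Rightarrow> real \<Rightarrow> real \<Rightarrow> real.
         \<forall>m\<in>margins ` \<F>.
           coherent_imprecise_copula (P m) (Q m) \<and>
           (\<forall>x y. (INF F\<in>{F\<in>\<F>. margins F = m}. F x y) = P m (fst m x) (snd m y) \<and>
                  (SUP F\<in>{F\<in>\<F>. margins F = m}. F x y) = Q m (fst m x) (snd m y))))
   \<and>
   (\<forall>(\<F>X :: (ereal \<Rightarrow> real) set) (\<F>Y :: (ereal \<Rightarrow> real) set) \<F>XY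
      (P :: (ereal \<Rightarrow> real) \<times> (ereal \<Rightarrow> real) \<Rightarrow> real \<Rightarrow> real \<Rightarrow> real) Q.
      \<F>X \<noteq> {} \<and> \<F>Y \<noteq> {} \<and>
      (\<forall>G\<in>\<F>X. univariate_distribution G) \<and> (\<forall>G\<in>\<F>Y. univariate_distribution G) \<and>
      \<F>XY \<subseteq> \<F>X \<times> \<F>Y \<and> \<F>XY \<noteq> {} \<and>
      (\<forall>m\<in>\<F>XY. coherent_imprecise_copula (P m) (Q m)) \<longrightarrow>
      (let \<F> = {(\<lambda>x y. C (fst m x) (snd m y)) | m C. m \<in> \<F>XY \<and> C \<in> copulas_between (P m) (Q m)}
       in \<F> \<noteq> {} \<and> (\<forall>F\<in>\<F>. bivariate_distribution F)))"
proof (intro conjI allI impI, goal_cases)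
  case (1 \<F>)
  then show ?case using coherent_imprecise_copulas_of_distributions by blast
next
  case (2 \<F>X \<F>Y \<F>XY P Q)
  have "bivariate_distribution (\<lambda>x y. C (fst m x) (snd m y))"
    if "m \<in> \<F>XY" "C \<in> copulas_between (P m) (Q m)" for m C
    using 2 that by (intro bivariate_distribution_copula_of_margins) (auto simp: copulas_between_def)
  moreover obtain m C where "m \<in> \<F>XY" "C \<in> copulas_between (P m) (Q m)"
    using 2 unfolding coherent_imprecise_copula_def by blast
  ultimately show ?case unfolding Let_def by blast
qed

end
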